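(* Let $b:\mathbb R\to\mathbb R$ be twice differentiable with $0<L_b\le b''(z)\le U_b$ for all $z$. Let $m\ge1$, $\lambda\in(0,1]$, $G>0$, $A>0$, let $t\ge3$ be an integer, let $\boldsymbol\theta_0\in\mathbb R^p$, let $\mathbf g_1,\dots,\mathbf g_{t-1},\mathbf u\in\mathbb R^p$ satisfy $\|\mathbf g_s\|_2\le G\sqrt m$ and $\|\mathbf u\|_2\le G\sqrt m$, let $r_1,\dots,r_{t-1}\in\mathbb R$ satisfy $\sum_{s=1}^{t-1}r_s^2\le A\,t\log t$, and let $\alpha=\sqrt t$. Define $$\mathcal L(\boldsymbol\theta)=\sum_{s=1}^{t-1}\Big(b(\langle\mathbf g_s,\boldsymbol\theta-\boldsymbol\theta_0\rangle)-r_s\langle\mathbf g_s,\boldsymbol\theta-\boldsymbol\theta_0\rangle\Big)+\frac{m\lambda}{2}\|\boldsymbol\theta-\boldsymbol\theta_0\|_2^2-\alpha\langle\mathbf u,\boldsymbol\theta-\boldsymbol\theta_0\rangle,$$ and the gradient-descent iterates $\boldsymbol\theta^{(0)}=\boldsymbol\theta_0$, $\boldsymbol\theta^{(j)}=\boldsymbol\theta^{(j-1)}-\eta\nabla\mathcal L(\boldsymbol\theta^{(j-1)})$ with $0<\eta\le(m\lambda+U_b\,t\,m\,G^2)^{-1}$. Then there is a constant $E>0$ depending only on $G,A,L_b,b(0),b'(0)$ such that for every $j\ge0$, $$\|\boldsymbol\theta^{(j)}-\boldsymbol\theta_0\|_2\le E\sqrt{\frac{t\log t}{m\lambda^2}}.$$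 *)

theory Defs
  imports "HOL-Analysis.Analysis"
begin

text \<open>Vectors in R^p are represented as functions nat \<Rightarrow> real; only the
coordinates 0..p-1 matter (inner product, norm and gradient only look at them).\<close>

definition ipp :: "nat \<Rightarrow> (nat \<Rightarrow> real) \<Rightarrow> (nat \<Rightarrow> real) \<Rightarrow> real" where
  "ipp p x y = (\<Sum>i<p. x i * y i)"

definition nrmp :: "nat \<Rightarrow> (nat \<Rightarrow> real) \<Rightarrow> real" where
  "nrmp p x = sqrt (ipp p x x)"

definition gradp :: "nat \<Rightarrow> ((nat \<Rightarrow> real) \<Rightarrow> real) \<Rightarrow> (nat \<Rightarrow> real) \<Rightarrow> (nat \<Rightarrow> real)" where
  "gradp p f \<theta> = (\<lambda>i. if i < p then deriv (\<lambda>x. f (\<theta>(i := x))) (\<theta> i) else 0)"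

fun gd :: "nat \<Rightarrow> ((nat \<Rightarrow> real) \<Rightarrow> real) \<Rightarrow> real \<Rightarrow> (nat \<Rightarrow> real) \<Rightarrow> nat \<Rightarrow> (nat \<Rightarrow> real)" where
  "gd p f \<eta> \<theta>0 0 = \<theta>0"
| "gd p f \<eta> \<theta>0 (Suc j) =
     (\<lambda>i. gd p f \<eta> \<theta>0 j i - \<eta> * gradp p f (gd p f \<eta> \<theta>0 j) i)"

definition lossL :: "(real \<Rightarrow> real) \<Rightarrow> nat \<Rightarrow> nat \<Rightarrow> (nat \<Rightarrow> nat \<Rightarrow> real) \<Rightarrow> (nat \<Rightarrow> real)
   \<Rightarrow> (nat \<Rightarrow> real) \<Rightarrow> (nat \<Rightarrow> real) \<Rightarrow> nat \<Rightarrow> real \<Rightarrow> (nat \<Rightarrow> real) \<Rightarrow> real" where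
  "lossL b p t g r u \<theta>0 m lam \<theta> =
     (let d = (\<lambda>i. \<theta> i - \<theta>0 i) in
      (\<Sum>s=1..t-1. b (ipp p (g s) d) - r s * ipp p (g s) d)
      + real m * lam / 2 * (nrmp p d)\<^sup>2 - sqrt (real t) * ipp p u d)"

end

theory Submission
  imports Defs
begin

text \<open>Gradient descent with step size at most the inverse of the smoothness constant
\<open>m\<lambda> + U\<^sub>b t m G\<^sup>2\<close> of the loss never increases the loss (descent lemma), so every iterate
satisfies \<open>L(\<theta>\<^sub>j) \<le> L(\<theta>\<^sub>0)\<close>. On the other hand, strong convexity of \<open>b\<close> bounds each summand
\<open>b(x) - r\<^sub>s x\<close> below by \<open>b(0) - (b'(0)\<^sup>2 + r\<^sub>s\<^sup>2) / L\<^sub>b\<close>, and Cauchy-Schwarz bounds the term in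
\<open>u\<close>, so with \<open>N = \<parallel>\<theta> - \<theta>\<^sub>0\<parallel>\<close>
  \<open>L(\<theta>) \<ge> L(\<theta>\<^sub>0) - C t log t + m\<lambda>/2 N\<^sup>2 - \<surd>t G \<surd>m N\<close>.
Comparing both bounds at an iterate gives a quadratic inequality in \<open>N\<close>; its positive root is at
most \<open>E \<surd>(t log t / (m\<lambda>\<^sup>2))\<close> with \<open>E = 2G + \<surd>(2 (b'(0)\<^sup>2 + A) / L\<^sub>b)\<close>, which does not
even depend on \<open>b(0)\<close>.\<close>

lemma ipp_commute: "ipp p x y = ipp p y x"
  unfolding ipp_def by (simp add: mult.commute)

lemma ipp_self_nonneg: "ipp p x x \<ge> 0"
  unfolding ipp_def by (auto intro: sum_nonneg)

lemma nrmp_nonneg: "nrmp p x \<ge> 0"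
  unfolding nrmp_def using ipp_self_nonneg by simp

lemma power2_nrmp: "(nrmp p x)\<^sup>2 = ipp p x x"
  unfolding nrmp_def using ipp_self_nonneg by simp

lemma ipp_cong: "(\<And>k. k < p \<Longrightarrow> x k = x' k) \<Longrightarrow> (\<And>k. k < p \<Longrightarrow> y k = y' k) \<Longrightarrow> ipp p x y = ipp p x' y'"
  unfolding ipp_def by (rule sum.cong) auto

lemma ipp_zero_right: "ipp p x (\<lambda>k. 0) = 0"
  unfolding ipp_def by simp

lemma ipp_diff_scale_right: "ipp p x (\<lambda>k. y k - c * z k) = ipp p x y - c * ipp p x z"
  unfolding ipp_def by (simp add: algebra_simps sum_subtractf sum_distrib_left)

lemma ipp_diff_scale_left: "ipp p (\<lambda>k. x k - c * y k) z = ipp p x z - c * ipp p y z"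
  unfolding ipp_def by (simp add: algebra_simps sum_subtractf sum_distrib_left)

lemma ipp_sum_scale_left: "ipp p (\<lambda>k. \<Sum>s\<in>S. c s * x s k) y = (\<Sum>s\<in>S. c s * ipp p (x s) y)"
  unfolding ipp_def
  by (simp add: sum_distrib_right sum_distrib_left mult.assoc sum.swap[of _ "{..<p}"])

lemma ipp_add_scale_diff_left:
  "ipp p (\<lambda>k. x k + a * y k - c * z k) w = ipp p x w + a * ipp p y w - c * ipp p z w"
  unfolding ipp_def by (simp add: algebra_simps sum_subtractf sum.distrib sum_distrib_left)

lemma power2_ipp_le: "(ipp p x y)\<^sup>2 \<le> ipp p x x * ipp p y y"
  unfolding ipp_def using Cauchy_Schwarz_ineq_sum[of x y "{..<p}"] by (simp add: power2_eq_square)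

lemma abs_ipp_le: "\<bar>ipp p x y\<bar> \<le> nrmp p x * nrmp p y"
proof -
  have "\<bar>ipp p x y\<bar> = sqrt ((ipp p x y)\<^sup>2)" by simp
  also have "\<dots> \<le> sqrt (ipp p x x * ipp p y y)" using power2_ipp_le real_sqrt_le_mono by blast
  finally show ?thesis unfolding nrmp_def by (simp add: real_sqrt_mult)
qed

lemma ipp_fun_upd_right:
  assumes "i < p"
  shows "ipp p y (\<lambda>k. (\<theta>(i := x)) k - \<theta>0 k) = ipp p y (\<lambda>k. \<theta> k - \<theta>0 k) + y i * (x - \<theta> i)"
proof -
  have "ipp p y (\<lambda>k. (\<theta>(i := x)) k - \<theta>0 k)
      = (\<Sum>k<p. y k * (\<theta> k - \<theta>0 k) + (if k = i then y i * (x - \<theta> i) else 0))"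
    unfolding ipp_def by (rule sum.cong) (auto simp: algebra_simps)
  with assms show ?thesis by (simp add: sum.distrib ipp_def)
qed

lemma ipp_fun_upd_self:
  assumes "i < p"
  shows "ipp p (\<lambda>k. (\<theta>(i := x)) k - \<theta>0 k) (\<lambda>k. (\<theta>(i := x)) k - \<theta>0 k)
     = ipp p (\<lambda>k. \<theta> k - \<theta>0 k) (\<lambda>k. \<theta> k - \<theta>0 k) + ((x - \<theta>0 i)\<^sup>2 - (\<theta> i - \<theta>0 i)\<^sup>2)"
proof -
  have "ipp p (\<lambda>k. (\<theta>(i := x)) k - \<theta>0 k) (\<lambda>k. (\<theta>(i := x)) k - \<theta>0 k)
      = (\<Sum>k<p. (\<theta> k - \<theta>0 k) * (\<theta> k - \<theta>0 k)
                 + (if k = i then (x - \<theta>0 i)\<^sup>2 - (\<theta> i - \<theta>0 i)\<^sup>2 else 0))"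
    unfolding ipp_def by (rule sum.cong) (auto simp: algebra_simps power2_eq_square)
  with assms show ?thesis by (simp add: sum.distrib ipp_def)
qed

lemma Taylor_second_order:
  fixes f f' f'' :: "real \<Rightarrow> real"
  assumes "\<And>z. (f has_real_derivative f' z) (at z)" and "\<And>z. (f' has_real_derivative f'' z) (at z)"
  obtains \<xi> where "f y = f x + f' x * (y - x) + f'' \<xi> / 2 * (y - x)\<^sup>2"
proof (cases "y = x")
  case True
  then show ?thesis using that by simp
next
  case False
  define diff where "diff = (\<lambda>k::nat. if k = 0 then f else if k = 1 then f' else f'')"
  have "\<exists>\<xi>. (if y < x then y < \<xi> \<and> \<xi> < x else x < \<xi> \<and> \<xi> < y) \<and>
    f y = (\<Sum>k<2. diff k x / fact k * (y - x) ^ k) + diff 2 \<xi> / fact 2 * (y - x) ^ 2"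
    by (rule Taylor[of 2 diff f "min x y" "max x y"])
      (use False assms in \<open>auto simp: diff_def less_2_cases_iff\<close>)
  then show ?thesis
    using that by (auto simp: diff_def numeral_2_eq_2)
qed

lemma Taylor_second_order_lower:
  fixes f f' f'' :: "real \<Rightarrow> real"
  assumes "\<And>z. (f has_real_derivative f' z) (at z)" and "\<And>z. (f' has_real_derivative f'' z) (at z)"
    and "\<And>z. L \<le> f'' z"
  shows "f x + f' x * (y - x) + L / 2 * (y - x)\<^sup>2 \<le> f y"
proof -
  obtain \<xi> where "f y = f x + f' x * (y - x) + f'' \<xi> / 2 * (y - x)\<^sup>2"
    using Taylor_second_order assms(1,2) .
  moreover have "L / 2 * (y - x)\<^sup>2 \<le> f'' \<xi> / 2 * (y - x)\<^sup>2"
    using assms(3) by (intro mult_right_mono) auto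
  ultimately show ?thesis by linarith
qed

lemma Taylor_second_order_upper:
  fixes f f' f'' :: "real \<Rightarrow> real"
  assumes "\<And>z. (f has_real_derivative f' z) (at z)" and "\<And>z. (f' has_real_derivative f'' z) (at z)"
    and "\<And>z. f'' z \<le> U"
  shows "f y \<le> f x + f' x * (y - x) + U / 2 * (y - x)\<^sup>2"
proof -
  obtain \<xi> where "f y = f x + f' x * (y - x) + f'' \<xi> / 2 * (y - x)\<^sup>2"
    using Taylor_second_order assms(1,2) .
  moreover have "f'' \<xi> / 2 * (y - x)\<^sup>2 \<le> U / 2 * (y - x)\<^sup>2"
    using assms(3) by (intro mult_right_mono) auto
  ultimately show ?thesis by linarith
qed

lemma self_le_mult_ln:
  fixes x :: real
  assumes "exp 1 \<le> x"
  shows "x \<le> x * ln x"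
proof -
  have "x > 0" using assms exp_gt_zero[of 1] by linarith
  moreover have "1 \<le> ln x"
    using assms \<open>x > 0\<close> by (subst ln_ge_iff) auto
  ultimately show ?thesis by (simp add: mult_le_cancel_left1)
qed

lemma quadratic_lower_bound:
  fixes a c x :: real
  assumes "a > 0"
  shows "- c\<^sup>2 / (2 * a) \<le> c * x + a / 2 * x\<^sup>2"
proof -
  have "2 * a * (c * x + a / 2 * x\<^sup>2) + c\<^sup>2 = (a * x + c)\<^sup>2"
    by (simp add: power2_eq_square algebra_simps)
  then have "- c\<^sup>2 \<le> 2 * a * (c * x + a / 2 * x\<^sup>2)"
    using zero_le_power2[of "a * x + c"] by linarith
  with assms show ?thesis by (simp add: field_simps)
qed

lemma quadratic_ineq_root_bound:
  fixes a b c x :: real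
  assumes "a > 0" "b \<ge> 0" "c \<ge> 0" "x \<ge> 0" and "a * x\<^sup>2 \<le> b * x + c"
  shows "x \<le> b / a + sqrt (c / a)"
proof (rule ccontr)
  define s where "s = sqrt (c / a)"
  have s: "s \<ge> 0" "a * s * s = c"
    using assms(1,3) by (auto simp: s_def mult.assoc)
  assume "\<not> ?thesis"
  then have x: "x > b / a + s" unfolding s_def by simp
  then have "a * x - b > a * s"
    using assms(1) by (simp add: field_simps)
  moreover have "x > s"
    using x assms(1,2) by (smt (verit) divide_nonneg_pos)
  ultimately have "x * (a * x - b) > s * (a * s)"
    using assms(1) s(1) by (intro mult_strict_mono') auto
  with s(2) assms(5) show False by (simp add: algebra_simps power2_eq_square)
qed

definition lossL_grad :: "(real \<Rightarrow> real) \<Rightarrow> nat \<Rightarrow> nat \<Rightarrow> (nat \<Rightarrow> nat \<Rightarrow> real) \<Rightarrow> (nat \<Rightarrow> real)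
   \<Rightarrow> (nat \<Rightarrow> real) \<Rightarrow> (nat \<Rightarrow> real) \<Rightarrow> nat \<Rightarrow> real \<Rightarrow> (nat \<Rightarrow> real) \<Rightarrow> (nat \<Rightarrow> real)" where
  "lossL_grad b p t g r u \<theta>0 m lam \<theta> =
     (let d = (\<lambda>i. \<theta> i - \<theta>0 i) in
      (\<lambda>i. (\<Sum>s=1..t-1. (deriv b (ipp p (g s) d) - r s) * g s i)
           + real m * lam * d i - sqrt (real t) * u i))"

lemma lossL_cong:
  assumes "\<And>k. k < p \<Longrightarrow> \<theta> k = \<theta>' k"
  shows "lossL b p t g r u \<theta>0 m lam \<theta> = lossL b p t g r u \<theta>0 m lam \<theta>'"
proof -
  have "ipp p x (\<lambda>i. \<theta> i - \<theta>0 i) = ipp p x (\<lambda>i. \<theta>' i - \<theta>0 i)" for x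
    by (rule ipp_cong) (auto simp: assms)
  moreover have "ipp p (\<lambda>i. \<theta> i - \<theta>0 i) (\<lambda>i. \<theta> i - \<theta>0 i) = ipp p (\<lambda>i. \<theta>' i - \<theta>0 i) (\<lambda>i. \<theta>' i - \<theta>0 i)"
    by (rule ipp_cong) (auto simp: assms)
  ultimately show ?thesis
    unfolding lossL_def Let_def power2_nrmp by simp
qed

lemma gradp_lossL:
  assumes b_diff: "\<And>z. b differentiable at z" and "i < p"
  shows "gradp p (lossL b p t g r u \<theta>0 m lam) \<theta> i = lossL_grad b p t g r u \<theta>0 m lam \<theta> i"
proof -
  define d where "d = (\<lambda>k. \<theta> k - \<theta>0 k)"
  have b_deriv: "(b has_real_derivative deriv b z) (at z)" for z
    using b_diff DERIV_deriv_iff_real_differentiable by blast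
  have "(\<lambda>x. lossL b p t g r u \<theta>0 m lam (\<theta>(i := x))) =
    (\<lambda>x. (\<Sum>s=1..t-1. b (ipp p (g s) d + g s i * (x - \<theta> i))
                       - r s * (ipp p (g s) d + g s i * (x - \<theta> i)))
         + real m * lam / 2 * (ipp p d d + ((x - \<theta>0 i)\<^sup>2 - (\<theta> i - \<theta>0 i)\<^sup>2))
         - sqrt (real t) * (ipp p u d + u i * (x - \<theta> i)))"
    unfolding lossL_def Let_def d_def power2_nrmp ipp_fun_upd_self[OF \<open>i < p\<close>]
      ipp_fun_upd_right[OF \<open>i < p\<close>] ..
  moreover have "(\<dots> has_real_derivative lossL_grad b p t g r u \<theta>0 m lam \<theta> i) (at (\<theta> i))"
    unfolding lossL_grad_def Let_def d_def[symmetric]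
    by (auto intro!: derivative_eq_intros b_deriv[THEN DERIV_chain2])
      (simp_all add: d_def field_simps)
  ultimately show ?thesis
    using \<open>i < p\<close> unfolding gradp_def by (simp add: DERIV_imp_deriv)
qed

lemma ipp_lossL_grad:
  "ipp p (lossL_grad b p t g r u \<theta>0 m lam \<theta>) w =
     (\<Sum>s=1..t-1. (deriv b (ipp p (g s) (\<lambda>k. \<theta> k - \<theta>0 k)) - r s) * ipp p (g s) w)
     + real m * lam * ipp p (\<lambda>k. \<theta> k - \<theta>0 k) w - sqrt (real t) * ipp p u w"
  unfolding lossL_grad_def Let_def ipp_add_scale_diff_left ipp_sum_scale_left ..

lemma lossL_step_upper:
  assumes b_smooth: "\<And>x y. b y \<le> b x + deriv b x * (y - x) + Ub / 2 * (y - x)\<^sup>2"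
  shows "lossL b p t g r u \<theta>0 m lam (\<lambda>k. \<theta> k - \<eta> * w k)
     \<le> lossL b p t g r u \<theta>0 m lam \<theta> - \<eta> * ipp p (lossL_grad b p t g r u \<theta>0 m lam \<theta>) w
        + \<eta>\<^sup>2 / 2 * (Ub * (\<Sum>s=1..t-1. (ipp p (g s) w)\<^sup>2) + real m * lam * ipp p w w)"
proof -
  define d where "d = (\<lambda>k. \<theta> k - \<theta>0 k)"
  define X where "X s = ipp p (g s) d" for s
  define Y where "Y s = ipp p (g s) w" for s
  have step_diff: "(\<lambda>k. \<theta> k - \<eta> * w k - \<theta>0 k) = (\<lambda>k. d k - \<eta> * w k)"
    by (simp add: d_def algebra_simps)
  have step_sq: "ipp p (\<lambda>k. d k - \<eta> * w k) (\<lambda>k. d k - \<eta> * w k)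
      = ipp p d d - 2 * \<eta> * ipp p d w + \<eta>\<^sup>2 * ipp p w w"
    by (simp add: ipp_diff_scale_left ipp_diff_scale_right ipp_commute[of p w d]
        power2_eq_square algebra_simps)
  have b_step: "b (X s - \<eta> * Y s) - r s * (X s - \<eta> * Y s)
      \<le> b (X s) - r s * X s - \<eta> * ((deriv b (X s) - r s) * Y s) + Ub / 2 * \<eta>\<^sup>2 * (Y s)\<^sup>2" for s
    using b_smooth[where x = "X s" and y = "X s - \<eta> * Y s"] by (simp add: algebra_simps power2_eq_square)
  have "lossL b p t g r u \<theta>0 m lam (\<lambda>k. \<theta> k - \<eta> * w k)
      = (\<Sum>s=1..t-1. b (X s - \<eta> * Y s) - r s * (X s - \<eta> * Y s))
        + real m * lam / 2 * (ipp p d d - 2 * \<eta> * ipp p d w + \<eta>\<^sup>2 * ipp p w w)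
        - sqrt (real t) * (ipp p u d - \<eta> * ipp p u w)"
    unfolding lossL_def Let_def power2_nrmp step_diff step_sq
    unfolding ipp_diff_scale_right X_def Y_def ..
  also have "\<dots> \<le> (\<Sum>s=1..t-1. b (X s) - r s * X s - \<eta> * ((deriv b (X s) - r s) * Y s)
                                  + Ub / 2 * \<eta>\<^sup>2 * (Y s)\<^sup>2)
        + real m * lam / 2 * (ipp p d d - 2 * \<eta> * ipp p d w + \<eta>\<^sup>2 * ipp p w w)
        - sqrt (real t) * (ipp p u d - \<eta> * ipp p u w)"
    using b_step by (intro diff_right_mono add_right_mono sum_mono)
  also have "\<dots> = lossL b p t g r u \<theta>0 m lam \<theta> - \<eta> * ipp p (lossL_grad b p t g r u \<theta>0 m lam \<theta>) w
        + \<eta>\<^sup>2 / 2 * (Ub * (\<Sum>s=1..t-1. (Y s)\<^sup>2) + real m * lam * ipp p w w)"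
  proof -
    have "(\<Sum>s=1..t-1. b (X s) - r s * X s - \<eta> * ((deriv b (X s) - r s) * Y s)
                      + Ub / 2 * \<eta>\<^sup>2 * (Y s)\<^sup>2)
        = (\<Sum>s=1..t-1. b (X s) - r s * X s) - \<eta> * (\<Sum>s=1..t-1. (deriv b (X s) - r s) * Y s)
          + Ub / 2 * \<eta>\<^sup>2 * (\<Sum>s=1..t-1. (Y s)\<^sup>2)"
      by (simp add: sum.distrib sum_subtractf sum_distrib_left)
    then show ?thesis
      unfolding lossL_def Let_def power2_nrmp ipp_lossL_grad d_def[symmetric] X_def[symmetric]
        Y_def[symmetric]
      by (simp add: algebra_simps power2_eq_square)
  qed
  finally show ?thesis unfolding Y_def .
qed

lemma sum_power2_ipp_le:
  assumes "finite S" and "\<And>s. s \<in> S \<Longrightarrow> nrmp p (x s) \<le> c"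
  shows "(\<Sum>s\<in>S. (ipp p (x s) w)\<^sup>2) \<le> real (card S) * c\<^sup>2 * ipp p w w"
proof -
  have "(ipp p (x s) w)\<^sup>2 \<le> c\<^sup>2 * ipp p w w" if "s \<in> S" for s
  proof -
    have "(ipp p (x s) w)\<^sup>2 \<le> (nrmp p (x s))\<^sup>2 * ipp p w w"
      using power2_ipp_le by (simp add: power2_nrmp)
    also have "\<dots> \<le> c\<^sup>2 * ipp p w w"
      using assms(2)[OF that] nrmp_nonneg ipp_self_nonneg
      by (intro mult_right_mono power_mono) auto
    finally show ?thesis .
  qed
  then have "(\<Sum>s\<in>S. (ipp p (x s) w)\<^sup>2) \<le> (\<Sum>s\<in>S. c\<^sup>2 * ipp p w w)"
    by (rule sum_mono)
  then show ?thesis by simp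
qed

lemma lossL_gd_step_le:
  assumes b_diff: "\<And>z. b differentiable at z"
    and b_smooth: "\<And>x y. b y \<le> b x + deriv b x * (y - x) + Ub / 2 * (y - x)\<^sup>2"
    and "Ub \<ge> 0" and g_bound: "\<forall>s\<in>{1..t-1}. nrmp p (g s) \<le> G * sqrt (real m)"
    and "\<eta> \<ge> 0" and step_size: "\<eta> * (real m * lam + Ub * real t * real m * G\<^sup>2) \<le> 1"
  shows "lossL b p t g r u \<theta>0 m lam (\<lambda>i. \<theta> i - \<eta> * gradp p (lossL b p t g r u \<theta>0 m lam) \<theta> i)
     \<le> lossL b p t g r u \<theta>0 m lam \<theta>
        - \<eta> / 2 * ipp p (lossL_grad b p t g r u \<theta>0 m lam \<theta>) (lossL_grad b p t g r u \<theta>0 m lam \<theta>)"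
proof -
  define L where "L = lossL b p t g r u \<theta>0 m lam"
  define v where "v = lossL_grad b p t g r u \<theta>0 m lam \<theta>"
  define V where "V = ipp p v v"
  have "V \<ge> 0" unfolding V_def by (rule ipp_self_nonneg)
  have "(\<Sum>s=1..t-1. (ipp p (g s) v)\<^sup>2) \<le> real (t - 1) * (G * sqrt (real m))\<^sup>2 * V"
    using sum_power2_ipp_le[of "{1..t-1}" p g "G * sqrt (real m)" v] g_bound
    unfolding V_def by simp
  also have "\<dots> \<le> real t * (G * sqrt (real m))\<^sup>2 * V"
    using \<open>V \<ge> 0\<close> by (intro mult_right_mono) auto
  also have "\<dots> = real t * real m * G\<^sup>2 * V"
    by (simp add: power_mult_distrib)
  finally have sum_bound: "Ub * (\<Sum>s=1..t-1. (ipp p (g s) v)\<^sup>2) \<le> Ub * (real t * real m * G\<^sup>2 * V)"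
    using \<open>Ub \<ge> 0\<close> by (rule mult_left_mono)
  have "\<eta>\<^sup>2 / 2 * (Ub * (\<Sum>s=1..t-1. (ipp p (g s) v)\<^sup>2) + real m * lam * V)
      \<le> \<eta>\<^sup>2 / 2 * (Ub * (real t * real m * G\<^sup>2 * V) + real m * lam * V)"
    by (rule mult_left_mono[OF add_right_mono[OF sum_bound]]) simp
  also have "\<dots> = \<eta> / 2 * V * (\<eta> * (real m * lam + Ub * real t * real m * G\<^sup>2))"
    by (simp add: power2_eq_square algebra_simps)
  also have "\<dots> \<le> \<eta> / 2 * V"
    using mult_left_mono[OF step_size, of "\<eta> / 2 * V"] \<open>V \<ge> 0\<close> \<open>\<eta> \<ge> 0\<close> by simp
  finally have curvature:
    "\<eta>\<^sup>2 / 2 * (Ub * (\<Sum>s=1..t-1. (ipp p (g s) v)\<^sup>2) + real m * lam * V) \<le> \<eta> / 2 * V" .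
  \<comment> \<open>\<open>gradp\<close> is \<open>0\<close> at coordinates \<open>\<ge> p\<close>, where \<open>v\<close> need not be; the loss ignores them.\<close>
  have "L (\<lambda>i. \<theta> i - \<eta> * gradp p L \<theta> i) = L (\<lambda>i. \<theta> i - \<eta> * v i)"
    unfolding L_def v_def by (rule lossL_cong) (simp add: gradp_lossL[OF b_diff])
  also have "\<dots> \<le> L \<theta> - \<eta> * V + \<eta>\<^sup>2 / 2 * (Ub * (\<Sum>s=1..t-1. (ipp p (g s) v)\<^sup>2) + real m * lam * V)"
    unfolding L_def V_def v_def by (rule lossL_step_upper[OF b_smooth])
  finally show ?thesis
    using curvature unfolding L_def V_def v_def by linarith
qed

lemma gd_le_initial:
  assumes "\<And>\<theta>. f (\<lambda>i. \<theta> i - \<eta> * gradp p f \<theta> i) \<le> f \<theta>"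
  shows "f (gd p f \<eta> \<theta>0 j) \<le> f \<theta>0"
proof (induction j)
  case (Suc j)
  then show ?case using assms order.trans by simp blast
qed simp

lemma lossL_gd_le_initial:
  assumes b_diff: "\<And>z. b differentiable at z"
    and b_smooth: "\<And>x y. b y \<le> b x + deriv b x * (y - x) + Ub / 2 * (y - x)\<^sup>2"
    and "Ub \<ge> 0" and g_bound: "\<forall>s\<in>{1..t-1}. nrmp p (g s) \<le> G * sqrt (real m)"
    and "\<eta> \<ge> 0" and step_size: "\<eta> * (real m * lam + Ub * real t * real m * G\<^sup>2) \<le> 1"
  shows "lossL b p t g r u \<theta>0 m lam (gd p (lossL b p t g r u \<theta>0 m lam) \<eta> \<theta>0 j)
     \<le> lossL b p t g r u \<theta>0 m lam \<theta>0"
proof (rule gd_le_initial)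
  fix \<theta>
  have "\<eta> / 2 * ipp p (lossL_grad b p t g r u \<theta>0 m lam \<theta>) (lossL_grad b p t g r u \<theta>0 m lam \<theta>) \<ge> 0"
    using \<open>\<eta> \<ge> 0\<close> ipp_self_nonneg by simp
  with lossL_gd_step_le[OF assms, of r u \<theta>0 \<theta>]
  show "lossL b p t g r u \<theta>0 m lam (\<lambda>i. \<theta> i - \<eta> * gradp p (lossL b p t g r u \<theta>0 m lam) \<theta> i)
      \<le> lossL b p t g r u \<theta>0 m lam \<theta>"
    by linarith
qed

lemma lossL_at_center: "lossL b p t g r u \<theta>0 m lam \<theta>0 = real (t - 1) * b 0"
  unfolding lossL_def Let_def nrmp_def by (simp add: ipp_zero_right)

lemma lossL_lower_bound:
  assumes b_convex: "\<And>y. b 0 + deriv b 0 * y + Lb / 2 * y\<^sup>2 \<le> b y"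
    and "Lb > 0" and u_bound: "nrmp p u \<le> G * sqrt (real m)"
  shows "lossL b p t g r u \<theta>0 m lam \<theta>0
     - (real (t - 1) * (deriv b 0)\<^sup>2 + (\<Sum>s=1..t-1. (r s)\<^sup>2)) / Lb
     + real m * lam / 2 * (nrmp p (\<lambda>k. \<theta> k - \<theta>0 k))\<^sup>2
     - sqrt (real t) * (G * sqrt (real m)) * nrmp p (\<lambda>k. \<theta> k - \<theta>0 k)
     \<le> lossL b p t g r u \<theta>0 m lam \<theta>"
proof -
  define d where "d = (\<lambda>k. \<theta> k - \<theta>0 k)"
  have term_bound: "b 0 - ((deriv b 0)\<^sup>2 + (r s)\<^sup>2) / Lb \<le> b x - r s * x" for s x
  proof -
    have "(deriv b 0 - r s)\<^sup>2 \<le> 2 * ((deriv b 0)\<^sup>2 + (r s)\<^sup>2)"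
      using zero_le_power2[of "deriv b 0 + r s"] by (simp add: power2_eq_square algebra_simps)
    then have "(deriv b 0 - r s)\<^sup>2 / (2 * Lb) \<le> 2 * ((deriv b 0)\<^sup>2 + (r s)\<^sup>2) / (2 * Lb)"
      using \<open>Lb > 0\<close> by (simp add: divide_right_mono)
    also have "\<dots> = ((deriv b 0)\<^sup>2 + (r s)\<^sup>2) / Lb"
      by (rule mult_divide_mult_cancel_left) simp
    finally have "- (((deriv b 0)\<^sup>2 + (r s)\<^sup>2) / Lb) \<le> (deriv b 0 - r s) * x + Lb / 2 * x\<^sup>2"
      using quadratic_lower_bound[OF \<open>Lb > 0\<close>, of "deriv b 0 - r s" x] by simp
    then show ?thesis
      using b_convex[of x] by (simp add: algebra_simps)
  qed
  have "real (t - 1) * b 0 - (real (t - 1) * (deriv b 0)\<^sup>2 + (\<Sum>s=1..t-1. (r s)\<^sup>2)) / Lb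
      = (\<Sum>s=1..t-1. b 0 - ((deriv b 0)\<^sup>2 + (r s)\<^sup>2) / Lb)"
    by (simp add: sum_subtractf sum_divide_distrib[symmetric] sum.distrib)
  also have "\<dots> \<le> (\<Sum>s=1..t-1. b (ipp p (g s) d) - r s * ipp p (g s) d)"
    using term_bound by (rule sum_mono)
  finally have loss_sum: "real (t - 1) * b 0 - (real (t - 1) * (deriv b 0)\<^sup>2 + (\<Sum>s=1..t-1. (r s)\<^sup>2)) / Lb
      \<le> (\<Sum>s=1..t-1. b (ipp p (g s) d) - r s * ipp p (g s) d)" .
  have "ipp p u d \<le> nrmp p u * nrmp p d"
    using abs_ipp_le[of p u d] by linarith
  also have "\<dots> \<le> G * sqrt (real m) * nrmp p d"
    using u_bound nrmp_nonneg by (rule mult_right_mono)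
  finally have "sqrt (real t) * ipp p u d \<le> sqrt (real t) * (G * sqrt (real m)) * nrmp p d"
    by (simp add: mult.assoc mult_left_mono)
  with loss_sum show ?thesis
    unfolding lossL_at_center unfolding lossL_def Let_def d_def by linarith
qed

lemma distance_bound_of_quadratic_ineq:
  fixes G C N lam :: real and m t :: nat
  assumes "m \<ge> 1" "0 < lam" "lam \<le> 1" "t \<ge> 3" "G \<ge> 0" "C \<ge> 0" "N \<ge> 0"
    and quadratic: "real m * lam / 2 * N\<^sup>2 \<le> sqrt (real t) * (G * sqrt (real m)) * N + C * (real t * ln (real t))"
  shows "N \<le> (2 * G + sqrt (2 * C)) * sqrt (real t * ln (real t) / (real m * lam\<^sup>2))"
proof -
  define T where "T = real t * ln (real t)"
  define Q where "Q = sqrt (T / (real m * lam\<^sup>2))"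
  define a where "a = real m * lam / 2"
  have "real m > 0" "a > 0" using assms(1,2) by (auto simp: a_def)
  have "real t \<le> T"
    unfolding T_def using \<open>t \<ge> 3\<close> exp_le by (intro self_le_mult_ln) simp
  have Q_eq: "Q = sqrt T / (sqrt (real m) * lam)"
    unfolding Q_def using \<open>lam > 0\<close> by (simp add: real_sqrt_divide real_sqrt_mult)
  have "N \<le> sqrt (real t) * (G * sqrt (real m)) / a + sqrt (C * T / a)"
    using quadratic_ineq_root_bound[OF \<open>a > 0\<close> _ _ \<open>N \<ge> 0\<close>] quadratic assms(5,6) \<open>real t \<le> T\<close>
    unfolding a_def T_def by simp
  moreover have "sqrt (real t) * (G * sqrt (real m)) / a \<le> 2 * G * Q"
  proof -
    have "sqrt (real t) * (G * sqrt (real m)) / a = 2 * G * sqrt (real t) / (sqrt (real m) * lam)"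
      unfolding a_def using \<open>real m > 0\<close> \<open>lam > 0\<close> real_sqrt_mult_self[of "real m"]
      by (simp add: field_simps)
    also have "\<dots> \<le> 2 * G * sqrt T / (sqrt (real m) * lam)"
      using assms(2,5) \<open>real m > 0\<close> \<open>real t \<le> T\<close> by (intro divide_right_mono mult_left_mono) auto
    finally show ?thesis unfolding Q_eq by simp
  qed
  moreover have "sqrt (C * T / a) \<le> sqrt (2 * C) * Q"
  proof -
    have "real m * lam\<^sup>2 \<le> real m * lam"
      using assms(2,3) \<open>real m > 0\<close> by (auto simp: power2_eq_square mult_le_cancel_left1)
    then have "2 * C * T / (real m * lam) \<le> 2 * C * T / (real m * lam\<^sup>2)"
      using assms(2,6) \<open>real m > 0\<close> \<open>real t \<le> T\<close> by (intro divide_left_mono) auto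
    moreover have "C * T / a = 2 * C * T / (real m * lam)"
      unfolding a_def by (simp add: mult_ac)
    ultimately have "C * T / a \<le> 2 * C * T / (real m * lam\<^sup>2)"
      by simp
    then show ?thesis
      unfolding Q_def by (simp add: real_sqrt_mult[symmetric])
  qed
  ultimately show ?thesis unfolding Q_def T_def by (simp add: algebra_simps)
qed

lemma gd_lossL_distance_bound:
  fixes G A Lb Ub lam \<eta> :: real and b :: "real \<Rightarrow> real"
  assumes "G > 0" and "A > 0" and "Lb > 0"
    and b_diff: "\<forall>z. b differentiable at z" and b'_diff: "\<forall>z. deriv b differentiable at z"
    and b''_bounds: "\<forall>z. Lb \<le> deriv (deriv b) z \<and> deriv (deriv b) z \<le> Ub"
    and "m \<ge> 1" and "0 < lam" and "lam \<le> 1" and "t \<ge> 3"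
    and g_bound: "\<forall>s\<in>{1..t-1}. nrmp p (g s) \<le> G * sqrt (real m)"
    and u_bound: "nrmp p u \<le> G * sqrt (real m)"
    and r_bound: "(\<Sum>s=1..t-1. (r s)\<^sup>2) \<le> A * real t * ln (real t)"
    and "0 < \<eta>" and step_size: "\<eta> \<le> 1 / (real m * lam + Ub * real t * real m * G\<^sup>2)"
  shows "nrmp p (\<lambda>i. gd p (lossL b p t g r u \<theta>0 m lam) \<eta> \<theta>0 j i - \<theta>0 i)
     \<le> (2 * G + sqrt (2 * (((deriv b 0)\<^sup>2 + A) / Lb))) * sqrt (real t * ln (real t) / (real m * lam\<^sup>2))"
proof -
  define L where "L = lossL b p t g r u \<theta>0 m lam"
  define N where "N = nrmp p (\<lambda>i. gd p L \<eta> \<theta>0 j i - \<theta>0 i)"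
  define C where "C = ((deriv b 0)\<^sup>2 + A) / Lb"
  define T where "T = real t * ln (real t)"
  have b_deriv: "(b has_real_derivative deriv b z) (at z)" for z
    using b_diff DERIV_deriv_iff_real_differentiable by blast
  have b'_deriv: "(deriv b has_real_derivative deriv (deriv b) z) (at z)" for z
    using b'_diff DERIV_deriv_iff_real_differentiable by blast
  have b_smooth: "b y \<le> b x + deriv b x * (y - x) + Ub / 2 * (y - x)\<^sup>2" for x y
    using Taylor_second_order_upper[OF b_deriv b'_deriv] b''_bounds by blast
  have b_convex: "b 0 + deriv b 0 * y + Lb / 2 * y\<^sup>2 \<le> b y" for y
    using Taylor_second_order_lower[OF b_deriv b'_deriv, of Lb 0 y] b''_bounds by simp
  have "Ub \<ge> 0"
    using b''_bounds \<open>Lb > 0\<close> by (meson less_le_trans order.strict_implies_order)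
  then have step_size': "\<eta> * (real m * lam + Ub * real t * real m * G\<^sup>2) \<le> 1"
    using step_size \<open>m \<ge> 1\<close> \<open>lam > 0\<close> by (simp add: le_divide_eq add_pos_nonneg)
  have descent: "L (gd p L \<eta> \<theta>0 j) \<le> L \<theta>0"
    unfolding L_def using b_diff \<open>\<eta> > 0\<close>
    by (intro lossL_gd_le_initial[OF _ b_smooth \<open>Ub \<ge> 0\<close> g_bound _ step_size']) auto
  have "real t \<le> T"
    unfolding T_def using \<open>t \<ge> 3\<close> exp_le by (intro self_le_mult_ln) simp
  then have "real (t - 1) \<le> T"
    by simp
  then have "real (t - 1) * (deriv b 0)\<^sup>2 + (\<Sum>s=1..t-1. (r s)\<^sup>2) \<le> ((deriv b 0)\<^sup>2 + A) * T"
    using r_bound mult_right_mono[of "real (t - 1)" T "(deriv b 0)\<^sup>2"]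
    unfolding T_def by (simp add: algebra_simps)
  then have "(real (t - 1) * (deriv b 0)\<^sup>2 + (\<Sum>s=1..t-1. (r s)\<^sup>2)) / Lb \<le> C * T"
    using \<open>Lb > 0\<close> unfolding C_def by (simp add: divide_right_mono)
  moreover have "L \<theta>0 - (real (t - 1) * (deriv b 0)\<^sup>2 + (\<Sum>s=1..t-1. (r s)\<^sup>2)) / Lb
      + real m * lam / 2 * N\<^sup>2 - sqrt (real t) * (G * sqrt (real m)) * N \<le> L (gd p L \<eta> \<theta>0 j)"
    unfolding L_def N_def
    by (rule lossL_lower_bound[OF b_convex \<open>Lb > 0\<close> u_bound])
  ultimately have "real m * lam / 2 * N\<^sup>2 \<le> sqrt (real t) * (G * sqrt (real m)) * N + C * T"
    using descent by linarith
  moreover have "C \<ge> 0" "N \<ge> 0"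
    using \<open>A > 0\<close> \<open>Lb > 0\<close> nrmp_nonneg unfolding C_def N_def by auto
  ultimately have "N \<le> (2 * G + sqrt (2 * C)) * sqrt (T / (real m * lam\<^sup>2))"
    using distance_bound_of_quadratic_ineq[OF \<open>m \<ge> 1\<close> \<open>0 < lam\<close> \<open>lam \<le> 1\<close> \<open>t \<ge> 3\<close>, of G C N]
      \<open>G > 0\<close> unfolding T_def by simp
  then show ?thesis unfolding N_def L_def C_def T_def .
qed

theorem mainTheorem5:
  fixes G A Lb b0 b1 :: real
  assumes "G > 0" and "A > 0" and "Lb > 0"
  shows "\<exists>E>0. \<forall>(b :: real \<Rightarrow> real) (Ub :: real) (m :: nat) (lam :: real) (t :: nat) (p :: nat)
            (\<theta>0 :: nat \<Rightarrow> real) (g :: nat \<Rightarrow> nat \<Rightarrow> real) (u :: nat \<Rightarrow> real) (r :: nat \<Rightarrow> real)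
            (\<eta> :: real) (j :: nat).
     (\<forall>z. b differentiable at z) \<and> (\<forall>z. deriv b differentiable at z) \<and>
     (\<forall>z. Lb \<le> deriv (deriv b) z \<and> deriv (deriv b) z \<le> Ub) \<and>
     b 0 = b0 \<and> deriv b 0 = b1 \<and>
     m \<ge> 1 \<and> 0 < lam \<and> lam \<le> 1 \<and> t \<ge> 3 \<and>
     (\<forall>s\<in>{1..t-1}. nrmp p (g s) \<le> G * sqrt (real m)) \<and>
     nrmp p u \<le> G * sqrt (real m) \<and>
     (\<Sum>s=1..t-1. (r s)\<^sup>2) \<le> A * real t * ln (real t) \<and>
     0 < \<eta> \<and> \<eta> \<le> 1 / (real m * lam + Ub * real t * real m * G\<^sup>2)
     \<longrightarrow> nrmp p (\<lambda>i. gd p (lossL b p t g r u \<theta>0 m lam) \<eta> \<theta>0 j i - \<theta>0 i)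
           \<le> E * sqrt (real t * ln (real t) / (real m * lam\<^sup>2))"
proof (intro exI[of _ "2 * G + sqrt (2 * ((b1\<^sup>2 + A) / Lb))"] conjI allI impI)
  show "2 * G + sqrt (2 * ((b1\<^sup>2 + A) / Lb)) > 0"
    using assms by (simp add: add_pos_nonneg)
qed (elim conjE, hypsubst, rule gd_lossL_distance_bound[OF assms])

end
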